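(* Let $\rho,\sigma$ be commuting quantum states on a $d$-dimensional Hilbert space with $\sigma$ full-rank, and let $1>\epsilon>0$. Let $\rho^\epsilon_{\mathrm{st}}$ and $\rho^\epsilon_{\mathrm{fl}}$ be the $\epsilon$-steep and $\epsilon$-flat approximations of $\rho$ relative to $\sigma$. Then for all $x\in[0,1]$, $$\mathcal L_{\rho^\epsilon_{\mathrm{st}}|\sigma}(x)\ge \ell_{r_{\mathrm{st}}}(x),\quad r_{\mathrm{st}}=2^{S(\rho\|\sigma)-f_\sigma(\rho,\epsilon)},\qquad \mathcal L_{\rho^\epsilon_{\mathrm{fl}}|\sigma}(x)\le \ell_{r_{\mathrm{fl}}}(x),\quad r_{\mathrm{fl}}=2^{S(\rho\|\sigma)+f_\sigma(\rho,\epsilon)},$$ where $f_\sigma(\rho,\epsilon):=\sqrt{V(\rho\|\sigma)(\epsilon^{-1}-1)}$ and $\ell_c(x)=\min(c\,x,1)$.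
   Context: Logs are base 2; $S(\rho\|\sigma)=\mathrm{Tr}(\rho(\log\rho-\log\sigma))$, $V(\rho\|\sigma)=\mathrm{Tr}(\rho(\log\rho-\log\sigma)^2)-S(\rho\|\sigma)^2$, $D(\rho,\tau)=\frac12\|\rho-\tau\|_1$. Write $\sigma=\sum_i s_i|i\rangle\langle i|$, $\rho=\sum_i p_i|i\rangle\langle i|$ in a common eigenbasis ordered so that $p_i/s_i\ge p_{i+1}/s_{i+1}$. For a state $\tau=\sum_i t_i|i\rangle\langle i|$ diagonal in this basis, the Lorenz curve $\mathcal L_{\tau|\sigma}:[0,1]\to[0,1]$ is the piecewise linear curve connecting the points $(\sum_{i\le k}s_{\pi(i)},\sum_{i\le k}t_{\pi(i)})$, $k=0,\dots,d$, where $\pi$ orders the indices so that $t_{\pi(i)}/s_{\pi(i)}$ is non-increasing (it is concave). Flat approximation $\rho^\epsilon_{\mathrm{fl}}=\sum_i\bar p_i|i\rangle\langle i|$: if $D(\rho,\sigma)<\epsilon$ set $\bar p_i=s_i$; otherwise let $M\in\{1,\dots,d-1\}$ be the smallest integer with $\epsilon\le\sum_{i=1}^M p_i-\frac{p_{M+1}}{s_{M+1}}\sum_{i=1}^M s_i$, let $N\in\{2,\dots,d\}$ be the largest integer with $\epsilon\le\frac{p_{N-1}}{s_{N-1}}\sum_{i=N}^d s_i-\sum_{i=N}^d p_i$ (these exist and $M\le N$), and set $\bar p_i=s_i\frac{(\sum_{j=1}^M p_j)-\epsilon}{\sum_{j=1}^M s_j}$ for $i\le M$, $\bar p_i=s_i\frac{(\sum_{j=N}^d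 p_j)+\epsilon}{\sum_{j=N}^d s_j}$ for $i\ge N$, and $\bar p_i=p_i$ otherwise. Steep approximation $\rho^\epsilon_{\mathrm{st}}=\sum_i\hat p_i|i\rangle\langle i|$: if $\epsilon\le 1-p_1$, let $R\in\{2,\dots,d\}$ be the largest index with $\sum_{i=R}^d p_i\ge\epsilon$, $r=\sum_{i=R+1}^d p_i$, and set $\hat p_1=p_1+\epsilon$, $\hat p_i=p_i$ for $1<i<R$, $\hat p_R=p_R-(\epsilon-r)$, $\hat p_i=0$ for $i>R$; if $\epsilon>1-p_1$, set $\hat p_1=1$ and $\hat p_i=0$ for $i>1$. *)

theory Defs
  imports Complex_Main
begin

text \<open>Commuting states rho, sigma on a d-dimensional Hilbert space are represented by
  their eigenvalue vectors p, s in a common eigenbasis, indexed by 1..d (functions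
  nat => real; values outside 1..d are irrelevant).\<close>

definition rel_ent :: "nat \<Rightarrow> (nat \<Rightarrow> real) \<Rightarrow> (nat \<Rightarrow> real) \<Rightarrow> real" where
  "rel_ent d p s = (\<Sum>i=1..d. p i * (log 2 (p i) - log 2 (s i)))"

definition rel_var :: "nat \<Rightarrow> (nat \<Rightarrow> real) \<Rightarrow> (nat \<Rightarrow> real) \<Rightarrow> real" where
  "rel_var d p s = (\<Sum>i=1..d. p i * (log 2 (p i) - log 2 (s i))^2) - (rel_ent d p s)^2"

definition trace_dist :: "nat \<Rightarrow> (nat \<Rightarrow> real) \<Rightarrow> (nat \<Rightarrow> real) \<Rightarrow> real" where
  "trace_dist d p t = (1/2) * (\<Sum>i=1..d. \<bar>p i - t i\<bar>)"

text \<open>Lorenz curve of a diagonal state t relative to s: piecewise linear curve through the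
  points (sum_{i<=k} s(pi i), sum_{i<=k} t(pi i)), k = 0..d, where pi orders the indices so
  that t/s is non-increasing.\<close>

definition lorenz :: "nat \<Rightarrow> (nat \<Rightarrow> real) \<Rightarrow> (nat \<Rightarrow> real) \<Rightarrow> real \<Rightarrow> real" where
  "lorenz d s t x =
    (let \<pi> = (SOME \<pi>. bij_betw \<pi> {1..d} {1..d} \<and>
                  (\<forall>i j. 1 \<le> i \<longrightarrow> i \<le> j \<longrightarrow> j \<le> d \<longrightarrow>
                        t (\<pi> j) / s (\<pi> j) \<le> t (\<pi> i) / s (\<pi> i)));
         X = (\<lambda>k. \<Sum>i=1..k. s (\<pi> i));
         Y = (\<lambda>k. \<Sum>i=1..k. t (\<pi> i));
         k = (LEAST k. 1 \<le> k \<and> k \<le> d \<and> x \<le> X k)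
     in Y (k - 1) + (x - X (k - 1)) / (X k - X (k - 1)) * (Y k - Y (k - 1)))"

text \<open>Flat approximation (indices assumed ordered so that p i / s i is non-increasing).\<close>

definition flat_M :: "nat \<Rightarrow> (nat \<Rightarrow> real) \<Rightarrow> (nat \<Rightarrow> real) \<Rightarrow> real \<Rightarrow> nat" where
  "flat_M d p s \<epsilon> = (LEAST M. 1 \<le> M \<and> M \<le> d - 1 \<and>
      \<epsilon> \<le> (\<Sum>i=1..M. p i) - p (M+1) / s (M+1) * (\<Sum>i=1..M. s i))"

definition flat_N :: "nat \<Rightarrow> (nat \<Rightarrow> real) \<Rightarrow> (nat \<Rightarrow> real) \<Rightarrow> real \<Rightarrow> nat" where
  "flat_N d p s \<epsilon> = (GREATEST N. 2 \<le> N \<and> N \<le> d \<and>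
      \<epsilon> \<le> p (N-1) / s (N-1) * (\<Sum>i=N..d. s i) - (\<Sum>i=N..d. p i))"

definition flat_approx :: "nat \<Rightarrow> (nat \<Rightarrow> real) \<Rightarrow> (nat \<Rightarrow> real) \<Rightarrow> real \<Rightarrow> nat \<Rightarrow> real" where
  "flat_approx d p s \<epsilon> i =
    (if trace_dist d p s < \<epsilon> then s i
     else (let M = flat_M d p s \<epsilon>; N = flat_N d p s \<epsilon> in
       if i \<le> M then s i * ((\<Sum>j=1..M. p j) - \<epsilon>) / (\<Sum>j=1..M. s j)
       else if N \<le> i then s i * ((\<Sum>j=N..d. p j) + \<epsilon>) / (\<Sum>j=N..d. s j)
       else p i))"

definition steep_approx :: "nat \<Rightarrow> (nat \<Rightarrow> real) \<Rightarrow> real \<Rightarrow> nat \<Rightarrow> real" where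
  "steep_approx d p \<epsilon> i =
    (if \<epsilon> \<le> 1 - p 1 then
       (let R = (GREATEST R. 2 \<le> R \<and> R \<le> d \<and> \<epsilon> \<le> (\<Sum>j=R..d. p j));
            r = (\<Sum>j=R+1..d. p j) in
        if i = 1 then p 1 + \<epsilon>
        else if i < R then p i
        else if i = R then p R - (\<epsilon> - r)
        else 0)
     else (if i = 1 then 1 else 0))"

definition f_sigma :: "nat \<Rightarrow> (nat \<Rightarrow> real) \<Rightarrow> (nat \<Rightarrow> real) \<Rightarrow> real \<Rightarrow> real" where
  "f_sigma d p s \<epsilon> = sqrt (rel_var d p s * (1/\<epsilon> - 1))"

definition ell :: "real \<Rightarrow> real \<Rightarrow> real" where
  "ell c x = min (c * x) 1"

end

theory Submission
  imports Defs
begin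

(* The Lorenz curve of t relative to s at x is the largest value of \<Sum>j w_j t_j over weights
   0 \<le> w \<le> 1 with \<Sum>j w_j s_j = x, and it lies below \<kappa> x + \<Sum>j max (t_j - \<kappa> s_j) 0 for every
   \<kappa>.  Hence min (c x) 1 is a lower bound as soon as t is supported on a set of s-mass at most
   1/c, and an upper bound as soon as t \<le> c s pointwise.

   Put c_\<plusminus> = 2^(S \<plusminus> f).  Under p the log-likelihood ratio log (p_i/s_i) has mean S and
   variance V, so by Cantelli's one-sided inequality the indices with p_i/s_i < c_- and those
   with p_i/s_i > c_+ each carry p-mass less than \<epsilon>.  The steep approximation is supported
   on an initial segment {1..R} with \<Sum>(i\<ge>R) p_i \<ge> \<epsilon>; hence p_R/s_R \<ge> c_-, and so
   c_- \<Sum>(i\<le>R) s_i \<le> \<Sum>(i\<le>R) p_i \<le> 1.  The flat approximation replaces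
   the head {1..M} by the level (\<Sum>(i\<le>M) p_i - \<epsilon>) / \<Sum>(i\<le>M) s_i, which Cantelli bounds by
   c_+; the tail {N..d} gets a level at most 1 \<le> c_+, and the untouched middle ratios lie
   below the head level. *)

lemma sum_atLeastAtMost_split:
  fixes f :: "nat \<Rightarrow> 'a::comm_monoid_add"
  assumes "m \<le> Suc k" "k \<le> n"
  shows "sum f {m..n} = sum f {m..k} + sum f {Suc k..n}"
  using sum.ub_add_nat[of m k f "n - k"] assms by simp

lemma sum_two_level:
  fixes f :: "nat \<Rightarrow> 'a::comm_semiring_1"
  assumes "R \<le> d"
  shows "(\<Sum>j=1..d. (if j \<le> R then a else b) * f j) = a * (\<Sum>j=1..R. f j) + b * (\<Sum>j=Suc R..d. f j)"
proof -
  have "(\<Sum>j=1..d. (if j \<le> R then a else b) * f j)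
      = (\<Sum>j=1..R. (if j \<le> R then a else b) * f j) + (\<Sum>j=Suc R..d. (if j \<le> R then a else b) * f j)"
    using assms by (intro sum_atLeastAtMost_split) auto
  also have "\<dots> = (\<Sum>j=1..R. a * f j) + (\<Sum>j=Suc R..d. b * f j)"
    by (intro arg_cong2[where f = "(+)"] sum.cong) auto
  finally show ?thesis by (simp add: sum_distrib_left)
qed

section \<open>Lorenz curves\<close>

lemma exists_sorting_bij:
  fixes g :: "nat \<Rightarrow> 'a::linorder"
  shows "\<exists>\<pi>. bij_betw \<pi> {1..d} {1..d} \<and>
     (\<forall>i j. 1 \<le> i \<longrightarrow> i \<le> j \<longrightarrow> j \<le> d \<longrightarrow> g (\<pi> j) \<le> g (\<pi> i))"
proof -
  define ys where "ys = sort_key g [1..<Suc d]"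
  define \<pi> where "\<pi> = (\<lambda>i. rev ys ! (i - 1))"
  have len: "length ys = d" and set_ys: "set ys = {1..d}" and "distinct ys"
    by (auto simp: ys_def)
  have "bij_betw (\<lambda>n. rev ys ! n) {..<d} {1..d}"
    using \<open>distinct ys\<close> len set_ys by (simp add: bij_betw_nth)
  moreover have "bij_betw (\<lambda>i. i - 1) {1..d} {..<d}"
    by (rule bij_betw_byWitness[where f' = Suc]) auto
  ultimately have "bij_betw \<pi> {1..d} {1..d}"
    unfolding \<pi>_def using bij_betw_trans[of "\<lambda>i. i - 1" _ _ "\<lambda>n. rev ys ! n"] by (simp add: comp_def)
  moreover have "g (\<pi> j) \<le> g (\<pi> i)" if "1 \<le> i" "i \<le> j" "j \<le> d" for i j
  proof -
    have "map g ys ! (d - j) \<le> map g ys ! (d - i)"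
      using that len by (intro sorted_nth_mono) (auto simp: ys_def)
    then show ?thesis using that len by (simp add: \<pi>_def rev_nth)
  qed
  ultimately show ?thesis by blast
qed

lemma lorenz_interpolation:
  fixes s t :: "nat \<Rightarrow> real"
  assumes s_pos: "\<forall>i\<in>{1..d}. 0 < s i" and sum_s: "(\<Sum>i=1..d. s i) = 1"
    and "0 \<le> x" "x \<le> 1"
  shows "\<exists>\<pi> k \<theta>. bij_betw \<pi> {1..d} {1..d} \<and>
     (\<forall>i j. 1 \<le> i \<longrightarrow> i \<le> j \<longrightarrow> j \<le> d \<longrightarrow> t (\<pi> j) / s (\<pi> j) \<le> t (\<pi> i) / s (\<pi> i)) \<and>
     1 \<le> k \<and> k \<le> d \<and> 0 \<le> \<theta> \<and> \<theta> \<le> 1 \<and>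
     x = (\<Sum>i=1..<k. s (\<pi> i)) + \<theta> * s (\<pi> k) \<and>
     lorenz d s t x = (\<Sum>i=1..<k. t (\<pi> i)) + \<theta> * t (\<pi> k)"
proof -
  define \<pi> where "\<pi> = (SOME \<pi>. bij_betw \<pi> {1..d} {1..d} \<and>
                  (\<forall>i j. 1 \<le> i \<longrightarrow> i \<le> j \<longrightarrow> j \<le> d \<longrightarrow>
                        t (\<pi> j) / s (\<pi> j) \<le> t (\<pi> i) / s (\<pi> i)))"
  have \<pi>: "bij_betw \<pi> {1..d} {1..d} \<and>
      (\<forall>i j. 1 \<le> i \<longrightarrow> i \<le> j \<longrightarrow> j \<le> d \<longrightarrow> t (\<pi> j) / s (\<pi> j) \<le> t (\<pi> i) / s (\<pi> i))"
    unfolding \<pi>_def using exists_sorting_bij[of d "\<lambda>i. t i / s i"] by (rule someI_ex)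
  define X where "X = (\<lambda>k. \<Sum>i=1..k. s (\<pi> i))"
  define Y where "Y = (\<lambda>k. \<Sum>i=1..k. t (\<pi> i))"
  define k where "k = (LEAST k. 1 \<le> k \<and> k \<le> d \<and> x \<le> X k)"
  have lorenz_eq: "lorenz d s t x = Y (k - 1) + (x - X (k - 1)) / (X k - X (k - 1)) * (Y k - Y (k - 1))"
    unfolding lorenz_def Let_def \<pi>_def[symmetric] k_def X_def Y_def by (rule refl)
  have "X d = 1"
    unfolding X_def using sum.reindex_bij_betw[OF conjunct1[OF \<pi>], of s] sum_s by simp
  have "d \<noteq> 0" using sum_s by (cases "d = 0") auto
  have k: "1 \<le> k \<and> k \<le> d \<and> x \<le> X k"
    unfolding k_def by (rule LeastI[of _ d]) (use \<open>X d = 1\<close> \<open>d \<noteq> 0\<close> \<open>x \<le> 1\<close> in auto)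
  have "s (\<pi> k) > 0" using k \<pi> s_pos by (auto simp: bij_betw_def)
  have X_k: "X k = X (k - 1) + s (\<pi> k)" and Y_k: "Y k = Y (k - 1) + t (\<pi> k)"
    unfolding X_def Y_def using k by (cases k; simp)+
  have "X (k - 1) \<le> x"
  proof (cases "k = 1")
    case True then show ?thesis using \<open>0 \<le> x\<close> by (simp add: X_def)
  next
    case False
    then have "\<not> (1 \<le> k - 1 \<and> k - 1 \<le> d \<and> x \<le> X (k - 1))"
      unfolding k_def by (intro not_less_Least) (use k in \<open>auto simp: k_def\<close>)
    then show ?thesis using k False by auto
  qed
  define \<theta> where "\<theta> = (x - X (k - 1)) / s (\<pi> k)"
  have "0 \<le> \<theta>" "\<theta> \<le> 1"
    using \<open>X (k - 1) \<le> x\<close> k X_k \<open>s (\<pi> k) > 0\<close> by (auto simp: \<theta>_def divide_simps)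
  moreover have "x = X (k - 1) + \<theta> * s (\<pi> k)" using \<open>s (\<pi> k) > 0\<close> by (simp add: \<theta>_def)
  moreover have "lorenz d s t x = Y (k - 1) + \<theta> * t (\<pi> k)"
    using lorenz_eq X_k Y_k by (simp add: \<theta>_def)
  moreover have "{1..k - 1} = {1..<k}" using k by auto
  ultimately show ?thesis
    using \<pi> k by (intro exI[of _ \<pi>] exI[of _ k] exI[of _ \<theta>]) (simp add: X_def Y_def)
qed

lemma lorenz_le_affine:
  fixes s t :: "nat \<Rightarrow> real"
  assumes "\<forall>i\<in>{1..d}. 0 < s i" "(\<Sum>i=1..d. s i) = 1" "0 \<le> x" "x \<le> 1"
  shows "lorenz d s t x \<le> \<kappa> * x + (\<Sum>j=1..d. max (t j - \<kappa> * s j) 0)"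
proof -
  obtain \<pi> k \<theta> where \<pi>: "bij_betw \<pi> {1..d} {1..d}"
     and k: "1 \<le> k" "k \<le> d" and \<theta>: "0 \<le> \<theta>" "\<theta> \<le> 1"
     and x_eq: "x = (\<Sum>i=1..<k. s (\<pi> i)) + \<theta> * s (\<pi> k)"
     and lorenz_eq: "lorenz d s t x = (\<Sum>i=1..<k. t (\<pi> i)) + \<theta> * t (\<pi> k)"
    using lorenz_interpolation[OF assms, of t] by blast
  define a where "a = (\<lambda>j. t j - \<kappa> * s j)"
  have "lorenz d s t x - \<kappa> * x = (\<Sum>i=1..<k. a (\<pi> i)) + \<theta> * a (\<pi> k)"
    using lorenz_eq x_eq by (simp add: a_def sum_subtractf sum_distrib_left algebra_simps)
  also have "\<dots> \<le> (\<Sum>i=1..<k. max (a (\<pi> i)) 0) + max (a (\<pi> k)) 0"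
  proof (intro add_mono sum_mono)
    show "\<theta> * a (\<pi> k) \<le> max (a (\<pi> k)) 0"
      using \<theta> by (cases "a (\<pi> k) \<ge> 0") (auto simp: mult_left_le_one_le mult_nonneg_nonpos)
  qed simp
  also have "\<dots> = (\<Sum>i=1..k. max (a (\<pi> i)) 0)"
    using k by (cases k) (auto simp: atLeastLessThanSuc_atLeastAtMost)
  also have "\<dots> \<le> (\<Sum>i=1..d. max (a (\<pi> i)) 0)"
    using k by (intro sum_mono2) auto
  also have "\<dots> = (\<Sum>j=1..d. max (a j) 0)"
    using sum.reindex_bij_betw[OF \<pi>, of "\<lambda>j. max (a j) 0"] by simp
  finally show ?thesis by (simp add: a_def)
qed

lemma weighted_sum_le_lorenz:
  fixes s t w :: "nat \<Rightarrow> real"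
  assumes s_pos: "\<forall>i\<in>{1..d}. 0 < s i" and sum_s: "(\<Sum>i=1..d. s i) = 1" and x: "0 \<le> x" "x \<le> 1"
    and w: "\<forall>j\<in>{1..d}. 0 \<le> w j \<and> w j \<le> 1" and x_eq: "(\<Sum>j=1..d. w j * s j) = x"
  shows "(\<Sum>j=1..d. w j * t j) \<le> lorenz d s t x"
proof -
  obtain \<pi> k \<theta> where \<pi>: "bij_betw \<pi> {1..d} {1..d}"
     and sorted: "\<forall>i j. 1 \<le> i \<longrightarrow> i \<le> j \<longrightarrow> j \<le> d \<longrightarrow> t (\<pi> j) / s (\<pi> j) \<le> t (\<pi> i) / s (\<pi> i)"
     and k: "1 \<le> k" "k \<le> d"
     and x_eq': "x = (\<Sum>i=1..<k. s (\<pi> i)) + \<theta> * s (\<pi> k)"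
     and lorenz_eq: "lorenz d s t x = (\<Sum>i=1..<k. t (\<pi> i)) + \<theta> * t (\<pi> k)"
    using lorenz_interpolation[OF s_pos sum_s x, of t] by blast
  have \<pi>_in: "\<pi> i \<in> {1..d}" if "i \<in> {1..d}" for i using \<pi> that by (auto simp: bij_betw_def)
  \<comment> \<open>\<open>\<rho>\<close> is the slope of the segment containing \<open>x\<close>: \<open>t \<ge> \<rho> s\<close> before it and \<open>t \<le> \<rho> s\<close> from it on\<close>
  define \<rho> where "\<rho> = t (\<pi> k) / s (\<pi> k)"
  define a where "a = (\<lambda>j. t j - \<rho> * s j)"
  have "s (\<pi> k) > 0" using \<pi>_in[of k] k s_pos by auto
  have a_nonneg: "a (\<pi> i) \<ge> 0" if "1 \<le> i" "i < k" for i
    using sorted \<pi>_in[of i] that k s_pos by (auto simp: a_def \<rho>_def pos_le_divide_eq)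
  have a_nonpos: "a (\<pi> i) \<le> 0" if "k \<le> i" "i \<le> d" for i
  proof -
    have "t (\<pi> i) / s (\<pi> i) \<le> \<rho>" using sorted that k by (auto simp: \<rho>_def)
    then show ?thesis using \<pi>_in[of i] that k s_pos by (auto simp: a_def pos_divide_le_eq)
  qed
  have "lorenz d s t x = (\<Sum>i=1..<k. a (\<pi> i)) + \<rho> * x"
    using lorenz_eq x_eq' \<open>s (\<pi> k) > 0\<close>
    by (simp add: a_def \<rho>_def sum_subtractf sum_distrib_left algebra_simps)
  moreover have "(\<Sum>j=1..d. w j * t j) = (\<Sum>j=1..d. w j * a j) + \<rho> * x"
    by (simp add: a_def algebra_simps sum.distrib sum_subtractf sum_distrib_left x_eq[symmetric])
  moreover have "(\<Sum>j=1..d. w j * a j) \<le> (\<Sum>i=1..<k. a (\<pi> i))"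
  proof -
    have "(\<Sum>j=1..d. w j * a j) = (\<Sum>i=1..d. w (\<pi> i) * a (\<pi> i))"
      using sum.reindex_bij_betw[OF \<pi>, of "\<lambda>j. w j * a j"] by simp
    also have "\<dots> = (\<Sum>i=1..<k. w (\<pi> i) * a (\<pi> i)) + (\<Sum>i=k..d. w (\<pi> i) * a (\<pi> i))"
    proof -
      have "{1..<k} = {1..k - 1}" "Suc (k - 1) = k" using k by auto
      moreover have "(\<Sum>i=1..d. w (\<pi> i) * a (\<pi> i))
          = (\<Sum>i=1..k - 1. w (\<pi> i) * a (\<pi> i)) + (\<Sum>i=Suc (k - 1)..d. w (\<pi> i) * a (\<pi> i))"
        using k by (intro sum_atLeastAtMost_split) auto
      ultimately show ?thesis by simp
    qed
    also have "\<dots> \<le> (\<Sum>i=1..<k. a (\<pi> i)) + 0"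
      using w \<pi>_in k a_nonneg a_nonpos
      by (intro add_mono sum_mono sum_nonpos)
         (auto simp: mult_left_le_one_le mult_nonneg_nonpos)
    finally show ?thesis by simp
  qed
  ultimately show ?thesis by simp
qed

lemma two_level_weights:
  fixes S x c :: real
  assumes S: "0 < S" "S \<le> 1" and x: "0 \<le> x" "x \<le> 1" and c: "c * S \<le> 1"
  obtains a b where "0 \<le> a" "a \<le> 1" "0 \<le> b" "b \<le> 1"
    and "a * S + b * (1 - S) = x" and "min (c * x) 1 \<le> a"
proof (cases "x \<le> S")
  case True
  have "c * x * S = (c * S) * x" by simp
  also have "\<dots> \<le> x" using mult_right_mono[OF c \<open>0 \<le> x\<close>] by simp
  finally have "c * x \<le> x / S" using S by (simp add: le_divide_eq)
  then show ?thesis using True S x by (intro that[of "x / S" 0]) auto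
next
  case False
  then have "S < 1" using x by simp
  then show ?thesis using False x by (intro that[of 1 "(x - S) / (1 - S)"]) auto
qed

lemma min_linear_le_lorenz:
  fixes s t :: "nat \<Rightarrow> real"
  assumes s_pos: "\<forall>i\<in>{1..d}. 0 < s i" and sum_s: "(\<Sum>i=1..d. s i) = 1"
    and R: "1 \<le> R" "R \<le> d"
    and t_zero: "\<forall>j\<in>{Suc R..d}. t j = 0" and sum_t: "(\<Sum>j=1..R. t j) = 1"
    and c: "c * (\<Sum>j=1..R. s j) \<le> 1"
    and x: "0 \<le> x" "x \<le> 1"
  shows "min (c * x) 1 \<le> lorenz d s t x"
proof -
  define S where "S = (\<Sum>j=1..R. s j)"
  have "0 < S" unfolding S_def using R s_pos by (intro sum_pos) auto
  have rest_s: "(\<Sum>j=Suc R..d. s j) = 1 - S" and rest_t: "(\<Sum>j=Suc R..d. t j) = 0"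
    using sum_two_level[OF R(2), of 1 1 s] sum_s t_zero by (simp_all add: S_def)
  have "0 \<le> (\<Sum>j=Suc R..d. s j)" using s_pos by (intro sum_nonneg) (auto intro: less_imp_le)
  then have "S \<le> 1" using rest_s by simp
  obtain a b where ab: "0 \<le> a" "a \<le> 1" "0 \<le> b" "b \<le> 1"
    and x_eq: "a * S + b * (1 - S) = x" and "min (c * x) 1 \<le> a"
    using two_level_weights[OF \<open>0 < S\<close> \<open>S \<le> 1\<close> x c[folded S_def]] by blast
  define w where "w = (\<lambda>j. if j \<le> R then a else b)"
  have "(\<Sum>j=1..d. w j * s j) = x"
    unfolding w_def sum_two_level[OF R(2)] S_def[symmetric] rest_s by (rule x_eq)
  then have "(\<Sum>j=1..d. w j * t j) \<le> lorenz d s t x"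
    using ab by (intro weighted_sum_le_lorenz[OF s_pos sum_s x]) (simp add: w_def)
  then show ?thesis
    using \<open>min (c * x) 1 \<le> a\<close> unfolding w_def sum_two_level[OF R(2)] sum_t rest_t by simp
qed

lemma lorenz_le_min_linear:
  fixes s t :: "nat \<Rightarrow> real"
  assumes "\<forall>i\<in>{1..d}. 0 < s i" "(\<Sum>i=1..d. s i) = 1"
    and "\<forall>j\<in>{1..d}. 0 \<le> t j" "(\<Sum>j=1..d. t j) = 1"
    and "\<forall>j\<in>{1..d}. t j \<le> c * s j"
    and x: "0 \<le> x" "x \<le> 1"
  shows "lorenz d s t x \<le> min (c * x) 1"
proof -
  have "(\<Sum>j=1..d. max (t j - c * s j) 0) = 0"
    using assms(5) by (intro sum.neutral) auto
  moreover have "(\<Sum>j=1..d. max (t j - 0 * s j) 0) = (\<Sum>j=1..d. t j)"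
    using assms(3) by (intro sum.cong) auto
  ultimately show ?thesis
    using assms(4) lorenz_le_affine[OF assms(1,2) x, of t c] lorenz_le_affine[OF assms(1,2) x, of t 0] by simp
qed

section \<open>A strict discrete Cantelli inequality\<close>

lemma cantelli_strict_bound:
  fixes p Z :: "'a \<Rightarrow> real"
  assumes "finite I" "A \<subseteq> I"
    and p_nonneg: "\<forall>i\<in>I. 0 \<le> p i" and sum_p: "(\<Sum>i\<in>I. p i) = 1"
    and mean: "(\<Sum>i\<in>I. p i * Z i) = 0" and var: "(\<Sum>i\<in>I. p i * (Z i)\<^sup>2) = V"
    and "0 < t" and above: "\<forall>i\<in>A. 0 < p i \<longrightarrow> t < Z i" and i0: "i0 \<in> A" "0 < p i0"
  shows "(\<Sum>i\<in>A. p i) * (V + t\<^sup>2) < V"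
proof -
  have "0 \<le> V" unfolding var[symmetric] using p_nonneg by (intro sum_nonneg) auto
  \<comment> \<open>Markov's inequality for \<open>(u + Z)\<^sup>2\<close>, with the shift \<open>u = V / t\<close> that makes it sharpest\<close>
  define u where "u = V / t"
  have "0 \<le> u" using \<open>0 \<le> V\<close> \<open>0 < t\<close> by (simp add: u_def)
  have sq_lt: "(u + t)\<^sup>2 < (u + Z i)\<^sup>2" if "i \<in> A" "0 < p i" for i
    using above that \<open>0 \<le> u\<close> \<open>0 < t\<close> by (intro power_strict_mono) auto
  have "(u + t)\<^sup>2 * (\<Sum>i\<in>A. p i) = (\<Sum>i\<in>A. p i * (u + t)\<^sup>2)"
    by (simp add: sum_distrib_right mult.commute)
  also have "\<dots> < (\<Sum>i\<in>A. p i * (u + Z i)\<^sup>2)"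
  proof (rule sum_strict_mono_ex1)
    show "finite A" using \<open>finite I\<close> \<open>A \<subseteq> I\<close> finite_subset by blast
    show "\<forall>i\<in>A. p i * (u + t)\<^sup>2 \<le> p i * (u + Z i)\<^sup>2"
      using sq_lt p_nonneg \<open>A \<subseteq> I\<close> by (force simp: less_eq_real_def)
    show "\<exists>i\<in>A. p i * (u + t)\<^sup>2 < p i * (u + Z i)\<^sup>2"
      using mult_strict_left_mono[OF sq_lt[OF i0] i0(2)] i0(1) by blast
  qed
  also have "\<dots> \<le> (\<Sum>i\<in>I. p i * (u + Z i)\<^sup>2)"
    using \<open>finite I\<close> \<open>A \<subseteq> I\<close> p_nonneg by (intro sum_mono2) auto
  also have "\<dots> = u\<^sup>2 * (\<Sum>i\<in>I. p i) + 2 * u * (\<Sum>i\<in>I. p i * Z i) + (\<Sum>i\<in>I. p i * (Z i)\<^sup>2)"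
    by (simp add: power2_eq_square algebra_simps sum.distrib sum_distrib_left)
  also have "\<dots> = u\<^sup>2 + V" unfolding sum_p mean var by simp
  finally have "(u + t)\<^sup>2 * (\<Sum>i\<in>A. p i) < u\<^sup>2 + V" .
  then have "(u + t)\<^sup>2 * (\<Sum>i\<in>A. p i) * t\<^sup>2 < (u\<^sup>2 + V) * t\<^sup>2"
    using \<open>0 < t\<close> by (intro mult_strict_right_mono) auto
  moreover have "(u + t)\<^sup>2 * t\<^sup>2 = (V + t\<^sup>2) * (V + t\<^sup>2)" and "(u\<^sup>2 + V) * t\<^sup>2 = (V + t\<^sup>2) * V"
    using \<open>0 < t\<close> by (simp_all add: u_def field_simps power2_eq_square)
  ultimately have "(V + t\<^sup>2) * ((V + t\<^sup>2) * (\<Sum>i\<in>A. p i)) < (V + t\<^sup>2) * V"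
    by (simp add: algebra_simps)
  moreover have "0 < V + t\<^sup>2" using \<open>0 \<le> V\<close> \<open>0 < t\<close> by (simp add: add_nonneg_pos)
  ultimately show ?thesis by (simp add: mult.commute)
qed

lemma cantelli_strict:
  fixes p Z :: "'a \<Rightarrow> real"
  assumes "finite I" "A \<subseteq> I"
    and p_nonneg: "\<forall>i\<in>I. 0 \<le> p i" and sum_p: "(\<Sum>i\<in>I. p i) = 1"
    and mean: "(\<Sum>i\<in>I. p i * Z i) = 0" and var: "(\<Sum>i\<in>I. p i * (Z i)\<^sup>2) = V"
    and \<epsilon>: "0 < \<epsilon>" "\<epsilon> < 1"
    and above: "\<forall>i\<in>A. 0 < p i \<longrightarrow> sqrt (V * (1 / \<epsilon> - 1)) < Z i"
  shows "(\<Sum>i\<in>A. p i) < \<epsilon>"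
proof (cases "(\<Sum>i\<in>A. p i) = 0")
  case False
  then obtain i0 where i0: "i0 \<in> A" "0 < p i0"
    using p_nonneg \<open>A \<subseteq> I\<close> by (metis less_eq_real_def subsetD sum.neutral)
  define t where "t = sqrt (V * (1 / \<epsilon> - 1))"
  have "0 < 1 / \<epsilon> - 1" using \<epsilon> by simp
  have "0 \<le> V" unfolding var[symmetric] using p_nonneg by (intro sum_nonneg) auto
  have "V \<noteq> 0"
  proof
    assume "V = 0"
    then have "\<forall>i\<in>I. p i * (Z i)\<^sup>2 = 0"
      using var p_nonneg \<open>finite I\<close> by (subst sum_nonneg_eq_0_iff[symmetric]) auto
    moreover have "0 < Z i0" using above i0 \<open>V = 0\<close> by simp
    moreover have "i0 \<in> I" using i0 \<open>A \<subseteq> I\<close> by blast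
    ultimately show False using i0 by force
  qed
  then have "0 < V" "0 < t" using \<open>0 \<le> V\<close> \<open>0 < 1 / \<epsilon> - 1\<close> by (simp_all add: t_def)
  have "t\<^sup>2 = V * (1 / \<epsilon> - 1)" using \<open>0 \<le> V\<close> \<open>0 < 1 / \<epsilon> - 1\<close> by (simp add: t_def)
  then have "V + t\<^sup>2 = V / \<epsilon>" using \<epsilon> by (simp add: field_simps)
  then have "(\<Sum>i\<in>A. p i) * (V / \<epsilon>) < V"
    using cantelli_strict_bound[OF assms(1-6) \<open>0 < t\<close> _ i0] above by (simp add: t_def)
  then show ?thesis using \<open>0 < V\<close> \<epsilon> by (simp add: field_simps)
qed (use \<epsilon> in simp)

section \<open>Commuting states as probability vectors\<close>

locale prob_pair =
  fixes d :: nat and p s :: "nat \<Rightarrow> real"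
  assumes p_nonneg: "\<forall>i\<in>{1..d}. 0 \<le> p i" and sum_p: "(\<Sum>i=1..d. p i) = 1"
    and s_pos: "\<forall>i\<in>{1..d}. 0 < s i" and sum_s: "(\<Sum>i=1..d. s i) = 1"
begin

lemma d_ne_0: "d \<noteq> 0"
  using sum_p by (cases "d = 0") auto

abbreviation log_ratio :: "nat \<Rightarrow> real" where
  "log_ratio i \<equiv> log 2 (p i) - log 2 (s i)"

lemma log_ratio_eq_log_div:
  assumes "i \<in> {1..d}" "0 < p i"
  shows "log_ratio i = log 2 (p i / s i)"
proof -
  have "0 < s i" using assms s_pos by auto
  then show ?thesis using \<open>0 < p i\<close> by (simp add: log_divide)
qed

lemma rel_ent_nonneg: "0 \<le> rel_ent d p s"
proof -
  have "(p i - s i) / ln 2 \<le> p i * log_ratio i" if i: "i \<in> {1..d}" for i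
  proof (cases "p i = 0")
    case False
    then have "0 < p i" "0 < s i" using p_nonneg s_pos i by (auto simp: less_eq_real_def)
    then have "p i * ln (s i / p i) \<le> s i - p i"
      using ln_le_minus_one[of "s i / p i"] by (simp add: field_simps)
    then have "p i - s i \<le> p i * (ln (p i) - ln (s i))"
      using \<open>0 < p i\<close> \<open>0 < s i\<close> by (simp add: ln_div algebra_simps)
    moreover have "p i * log_ratio i = p i * (ln (p i) - ln (s i)) / ln 2"
      by (simp add: log_def algebra_simps diff_divide_distrib)
    ultimately show ?thesis by (simp add: divide_right_mono)
  qed (use s_pos i in \<open>simp add: less_imp_le\<close>)
  then have "(\<Sum>i=1..d. (p i - s i) / ln 2) \<le> rel_ent d p s"
    unfolding rel_ent_def by (rule sum_mono)
  moreover have "(\<Sum>i=1..d. (p i - s i) / ln 2) = 0"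
    unfolding sum_divide_distrib[symmetric] sum_subtractf sum_p sum_s by simp
  ultimately show ?thesis by simp
qed

lemma rel_var_eq_variance: "rel_var d p s = (\<Sum>i=1..d. p i * (rel_ent d p s - log_ratio i)\<^sup>2)"
proof -
  define S where "S = rel_ent d p s"
  have "(\<Sum>i=1..d. p i * (S - log_ratio i)\<^sup>2)
      = (\<Sum>i=1..d. p i * (log_ratio i)\<^sup>2) - 2 * S * (\<Sum>i=1..d. p i * log_ratio i) + S\<^sup>2 * (\<Sum>i=1..d. p i)"
    by (simp add: power2_eq_square algebra_simps sum.distrib sum_subtractf sum_distrib_left)
  also have "\<dots> = (\<Sum>i=1..d. p i * (log_ratio i)\<^sup>2) - S\<^sup>2"
    unfolding sum_p rel_ent_def[symmetric] S_def by (simp add: power2_eq_square)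
  finally show ?thesis unfolding rel_var_def S_def by simp
qed

lemma log_ratio_centered: "(\<Sum>i=1..d. p i * (log_ratio i - rel_ent d p s)) = 0"
proof -
  have "(\<Sum>i=1..d. p i * (log_ratio i - rel_ent d p s))
      = (\<Sum>i=1..d. p i * log_ratio i) - (\<Sum>i=1..d. p i) * rel_ent d p s"
    by (simp add: right_diff_distrib sum_subtractf sum_distrib_right)
  then show ?thesis unfolding sum_p by (simp add: rel_ent_def)
qed

lemma f_sigma_nonneg:
  assumes "0 < \<epsilon>" "\<epsilon> \<le> 1"
  shows "0 \<le> f_sigma d p s \<epsilon>"
proof -
  have "0 \<le> rel_var d p s"
    unfolding rel_var_eq_variance using p_nonneg by (intro sum_nonneg) auto
  moreover have "0 \<le> 1 / \<epsilon> - 1" using assms by simp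
  ultimately show ?thesis by (simp add: f_sigma_def)
qed

lemma mass_of_ratio_below_lt:
  assumes \<epsilon>: "0 < \<epsilon>" "\<epsilon> < 1" and "A \<subseteq> {1..d}"
    and below: "\<forall>i\<in>A. p i / s i < 2 powr (rel_ent d p s - f_sigma d p s \<epsilon>)"
  shows "(\<Sum>i\<in>A. p i) < \<epsilon>"
proof (rule cantelli_strict[OF _ \<open>A \<subseteq> {1..d}\<close> p_nonneg sum_p _ _ \<epsilon>])
  show "(\<Sum>i=1..d. p i * (rel_ent d p s - log_ratio i)) = 0"
    using log_ratio_centered by (simp add: right_diff_distrib sum_subtractf)
  show "(\<Sum>i=1..d. p i * (rel_ent d p s - log_ratio i)\<^sup>2) = rel_var d p s"
    by (rule rel_var_eq_variance[symmetric])
  show "\<forall>i\<in>A. 0 < p i \<longrightarrow> sqrt (rel_var d p s * (1 / \<epsilon> - 1)) < rel_ent d p s - log_ratio i"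
  proof (intro ballI impI)
    fix i assume "i \<in> A" "0 < p i"
    then have "log 2 (p i / s i) < rel_ent d p s - f_sigma d p s \<epsilon>"
      using below \<open>A \<subseteq> {1..d}\<close> s_pos by (subst log_less_iff) auto
    then show "sqrt (rel_var d p s * (1 / \<epsilon> - 1)) < rel_ent d p s - log_ratio i"
      using log_ratio_eq_log_div \<open>i \<in> A\<close> \<open>0 < p i\<close> \<open>A \<subseteq> {1..d}\<close> by (auto simp: f_sigma_def)
  qed
qed simp

lemma mass_of_ratio_above_lt:
  assumes \<epsilon>: "0 < \<epsilon>" "\<epsilon> < 1" and "A \<subseteq> {1..d}"
    and above: "\<forall>i\<in>A. 2 powr (rel_ent d p s + f_sigma d p s \<epsilon>) < p i / s i"
  shows "(\<Sum>i\<in>A. p i) < \<epsilon>"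
proof (rule cantelli_strict[OF _ \<open>A \<subseteq> {1..d}\<close> p_nonneg sum_p _ _ \<epsilon>])
  show "(\<Sum>i=1..d. p i * (log_ratio i - rel_ent d p s)) = 0"
    by (rule log_ratio_centered)
  show "(\<Sum>i=1..d. p i * (log_ratio i - rel_ent d p s)\<^sup>2) = rel_var d p s"
    by (simp add: rel_var_eq_variance power2_commute)
  show "\<forall>i\<in>A. 0 < p i \<longrightarrow> sqrt (rel_var d p s * (1 / \<epsilon> - 1)) < log_ratio i - rel_ent d p s"
  proof (intro ballI impI)
    fix i assume "i \<in> A" "0 < p i"
    then have "rel_ent d p s + f_sigma d p s \<epsilon> < log 2 (p i / s i)"
      using above \<open>A \<subseteq> {1..d}\<close> s_pos by (subst less_log_iff) auto
    then show "sqrt (rel_var d p s * (1 / \<epsilon> - 1)) < log_ratio i - rel_ent d p s"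
      using log_ratio_eq_log_div \<open>i \<in> A\<close> \<open>0 < p i\<close> \<open>A \<subseteq> {1..d}\<close> by (auto simp: f_sigma_def)
  qed
qed simp

lemma one_le_powr_rel_ent_plus_f_sigma:
  assumes "0 < \<epsilon>" "\<epsilon> \<le> 1"
  shows "1 \<le> 2 powr (rel_ent d p s + f_sigma d p s \<epsilon>)"
  using rel_ent_nonneg f_sigma_nonneg[OF assms] by (intro ge_one_powr_ge_zero) auto

lemma head_excess_le_mass_above:
  assumes "m \<le> d" "0 \<le> c"
  shows "(\<Sum>i=1..m. p i) - c * (\<Sum>i=1..m. s i) \<le> (\<Sum>i\<in>{i\<in>{1..d}. c < p i / s i}. p i)"
proof -
  have "(\<Sum>i=1..m. p i) - c * (\<Sum>i=1..m. s i) = (\<Sum>i=1..m. p i - c * s i)"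
    by (simp add: sum_subtractf sum_distrib_left)
  also have "\<dots> \<le> (\<Sum>i=1..d. max (p i - c * s i) 0)"
    using \<open>m \<le> d\<close> by (intro order.trans[OF sum_mono sum_mono2]) auto
  also have "\<dots> \<le> (\<Sum>i=1..d. if c < p i / s i then p i else 0)"
  proof (rule sum_mono)
    fix i assume i: "i \<in> {1..d}"
    then have "0 < s i" "0 \<le> p i" using s_pos p_nonneg by auto
    then show "max (p i - c * s i) 0 \<le> (if c < p i / s i then p i else 0)"
      using \<open>0 \<le> c\<close> by (auto simp: not_less divide_le_eq)
  qed
  also have "\<dots> = (\<Sum>i\<in>{i\<in>{1..d}. c < p i / s i}. p i)"
    by (rule sum.inter_filter[symmetric]) simp
  finally show ?thesis .
qed

lemma trace_dist_eq_excess: "trace_dist d p s = (\<Sum>i=1..d. max (p i - s i) 0)"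
  and trace_dist_eq_deficit: "trace_dist d p s = (\<Sum>i=1..d. max (s i - p i) 0)"
proof -
  have "(\<Sum>i=1..d. \<bar>p i - s i\<bar>) = (\<Sum>i=1..d. max (p i - s i) 0) + (\<Sum>i=1..d. max (s i - p i) 0)"
    by (simp add: sum.distrib[symmetric]) (rule sum.cong, auto)
  moreover have "(\<Sum>i=1..d. max (p i - s i) 0) - (\<Sum>i=1..d. max (s i - p i) 0) = (\<Sum>i=1..d. p i - s i)"
    by (simp add: sum_subtractf[symmetric]) (rule sum.cong, auto)
  moreover have "(\<Sum>i=1..d. p i - s i) = 0"
    unfolding sum_subtractf sum_p sum_s by simp
  ultimately show "trace_dist d p s = (\<Sum>i=1..d. max (p i - s i) 0)"
    and "trace_dist d p s = (\<Sum>i=1..d. max (s i - p i) 0)"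
    by (simp_all add: trace_dist_def)
qed

lemma two_le_d_if_trace_dist_pos:
  assumes "0 < trace_dist d p s"
  shows "2 \<le> d"
proof (rule ccontr)
  assume "\<not> 2 \<le> d"
  then have "d = 1" using d_ne_0 by simp
  then show False using assms sum_p sum_s by (simp add: trace_dist_def)
qed

lemma trace_dist_le_head_excess:
  assumes "m \<le> d" "\<kappa> \<le> 1"
    and head: "\<forall>i\<in>{1..m}. \<kappa> \<le> p i / s i" and tail: "\<forall>i\<in>{Suc m..d}. p i / s i \<le> 1"
  shows "trace_dist d p s \<le> (\<Sum>i=1..m. p i) - \<kappa> * (\<Sum>i=1..m. s i)"
proof -
  have "trace_dist d p s = (\<Sum>i=1..m. max (p i - s i) 0) + (\<Sum>i=Suc m..d. max (p i - s i) 0)"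
    using trace_dist_eq_excess sum_atLeastAtMost_split[of 1 m d] \<open>m \<le> d\<close> by simp
  also have "(\<Sum>i=Suc m..d. max (p i - s i) 0) = 0"
    using tail s_pos \<open>m \<le> d\<close> by (intro sum.neutral) (auto simp: divide_le_eq)
  also have "(\<Sum>i=1..m. max (p i - s i) 0) \<le> (\<Sum>i=1..m. p i - \<kappa> * s i)"
  proof (rule sum_mono)
    fix i assume i: "i \<in> {1..m}"
    then have "0 < s i" using s_pos \<open>m \<le> d\<close> by auto
    then have "\<kappa> * s i \<le> p i" "\<kappa> * s i \<le> s i" using head i \<open>\<kappa> \<le> 1\<close> by (auto simp: le_divide_eq)
    then show "max (p i - s i) 0 \<le> p i - \<kappa> * s i" by simp
  qed
  finally show ?thesis by (simp add: sum_subtractf sum_distrib_left)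
qed

lemma trace_dist_le_tail_deficit:
  assumes "m \<le> d" "1 \<le> \<kappa>"
    and head: "\<forall>i\<in>{1..m}. 1 \<le> p i / s i" and tail: "\<forall>i\<in>{Suc m..d}. p i / s i \<le> \<kappa>"
  shows "trace_dist d p s \<le> \<kappa> * (\<Sum>i=Suc m..d. s i) - (\<Sum>i=Suc m..d. p i)"
proof -
  have "trace_dist d p s = (\<Sum>i=1..m. max (s i - p i) 0) + (\<Sum>i=Suc m..d. max (s i - p i) 0)"
    using trace_dist_eq_deficit sum_atLeastAtMost_split[of 1 m d] \<open>m \<le> d\<close> by simp
  also have "(\<Sum>i=1..m. max (s i - p i) 0) = 0"
    using head s_pos \<open>m \<le> d\<close> by (intro sum.neutral) (auto simp: le_divide_eq)
  also have "(\<Sum>i=Suc m..d. max (s i - p i) 0) \<le> (\<Sum>i=Suc m..d. \<kappa> * s i - p i)"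
  proof (rule sum_mono)
    fix i assume i: "i \<in> {Suc m..d}"
    then have "0 < s i" using s_pos by auto
    then have "p i \<le> \<kappa> * s i" "s i \<le> \<kappa> * s i" using tail i \<open>1 \<le> \<kappa>\<close> by (auto simp: divide_le_eq)
    then show "max (s i - p i) 0 \<le> \<kappa> * s i - p i" by simp
  qed
  finally show ?thesis by (simp add: sum_subtractf sum_distrib_left)
qed

end

locale sorted_prob_pair = prob_pair +
  assumes ratio_step: "\<forall>i. 1 \<le> i \<and> i < d \<longrightarrow> p (i+1) / s (i+1) \<le> p i / s i"
begin

lemma ratio_antimono: "1 \<le> i \<Longrightarrow> i \<le> j \<Longrightarrow> j \<le> d \<Longrightarrow> p j / s j \<le> p i / s i"
  using lift_Suc_antimono_le_ivl[of "{1..<d}" "\<lambda>i. p i / s i" i j] ratio_step by auto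

lemma ratio_le_on_tail: "1 \<le> m \<Longrightarrow> p m / s m \<le> \<kappa> \<Longrightarrow> \<forall>i\<in>{m..d}. p i / s i \<le> \<kappa>"
  using ratio_antimono by (meson atLeastAtMost_iff order_trans)

lemma ratio_ge_on_head: "m \<le> d \<Longrightarrow> \<kappa> \<le> p m / s m \<Longrightarrow> \<forall>i\<in>{1..m}. \<kappa> \<le> p i / s i"
  using ratio_antimono by (meson atLeastAtMost_iff order_trans)

lemma last_ratio_le_one: "p d / s d \<le> 1"
proof (rule ccontr)
  assume "\<not> p d / s d \<le> 1"
  have "s i < p i" if "i \<in> {1..d}" for i
  proof -
    have "1 < p i / s i" using ratio_antimono[of i d] that \<open>\<not> p d / s d \<le> 1\<close> by auto
    moreover have "0 < s i" using that s_pos by auto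
    ultimately show ?thesis by (simp add: less_divide_eq)
  qed
  then have "(\<Sum>i=1..d. s i) < (\<Sum>i=1..d. p i)" using d_ne_0 by (intro sum_strict_mono) auto
  then show False using sum_p sum_s by simp
qed

lemma first_ratio_ge_one: "1 \<le> p 1 / s 1"
proof (rule ccontr)
  assume "\<not> 1 \<le> p 1 / s 1"
  have "p i < s i" if "i \<in> {1..d}" for i
  proof -
    have "p i / s i < 1" using ratio_antimono[of 1 i] that \<open>\<not> 1 \<le> p 1 / s 1\<close> by auto
    moreover have "0 < s i" using that s_pos by auto
    ultimately show ?thesis by (simp add: divide_less_eq)
  qed
  then have "(\<Sum>i=1..d. p i) < (\<Sum>i=1..d. s i)" using d_ne_0 by (intro sum_strict_mono) auto
  then show False using sum_p sum_s by simp
qed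


section \<open>The steep approximation\<close>

lemma steep_cut_index:
  assumes "0 < \<epsilon>" "\<epsilon> \<le> 1 - p 1"
  defines "R \<equiv> GREATEST R. 2 \<le> R \<and> R \<le> d \<and> \<epsilon> \<le> (\<Sum>j=R..d. p j)"
  shows "2 \<le> R \<and> R \<le> d \<and> \<epsilon> \<le> (\<Sum>j=R..d. p j) \<and> (\<Sum>j=R+1..d. p j) < \<epsilon>"
proof -
  define Q where "Q R \<longleftrightarrow> 2 \<le> R \<and> R \<le> d \<and> \<epsilon> \<le> (\<Sum>j=R..d. p j)" for R
  have R_eq: "R = (GREATEST R. Q R)" by (simp add: R_def Q_def)
  have bounded: "\<And>R'. Q R' \<Longrightarrow> R' \<le> d" by (simp add: Q_def)
  have "2 \<le> d"
  proof (rule ccontr)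
    assume "\<not> 2 \<le> d"
    then have "d = 1" using d_ne_0 by simp
    then have "p 1 = 1" using sum_p by simp
    then show False using assms by simp
  qed
  then have "(\<Sum>j=1..d. p j) = p 1 + (\<Sum>j=2..d. p j)"
    using sum_atLeastAtMost_split[of 1 1 d p] by (simp add: numeral_2_eq_2)
  then have "Q 2" using \<open>2 \<le> d\<close> assms sum_p by (simp add: Q_def)
  then have "Q R" unfolding R_eq using bounded by (rule GreatestI_nat)
  moreover have "(\<Sum>j=R+1..d. p j) < \<epsilon>"
  proof (cases "R < d")
    case True
    have "\<not> Q (R + 1)"
      using Greatest_le_nat[of Q "R + 1" d] bounded R_eq by force
    then show ?thesis using True \<open>Q R\<close> by (simp add: Q_def)
  qed (use \<open>0 < \<epsilon>\<close> \<open>Q R\<close> in \<open>simp add: Q_def\<close>)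
  ultimately show ?thesis by (simp add: Q_def)
qed

lemma steep_approx_support:
  assumes "0 < \<epsilon>" "\<epsilon> \<le> 1"
  obtains R where "1 \<le> R" "R \<le> d" "\<epsilon> \<le> (\<Sum>j=R..d. p j)"
    and "\<forall>j\<in>{Suc R..d}. steep_approx d p \<epsilon> j = 0" and "(\<Sum>j=1..R. steep_approx d p \<epsilon> j) = 1"
proof (cases "\<epsilon> \<le> 1 - p 1")
  case False
  then have "steep_approx d p \<epsilon> = (\<lambda>i. if i = 1 then 1 else 0)"
    by (simp add: steep_approx_def fun_eq_iff)
  then show ?thesis using that[of 1] assms sum_p d_ne_0 by simp
next
  case True
  define R where "R = (GREATEST R. 2 \<le> R \<and> R \<le> d \<and> \<epsilon> \<le> (\<Sum>j=R..d. p j))"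
  define r where "r = (\<Sum>j=R+1..d. p j)"
  have R: "2 \<le> R" "R \<le> d" "\<epsilon> \<le> (\<Sum>j=R..d. p j)" and "r < \<epsilon>"
    using steep_cut_index[OF \<open>0 < \<epsilon>\<close> True] by (simp_all add: R_def r_def)
  have steep_eq: "steep_approx d p \<epsilon> i = (if i = 1 then p 1 + \<epsilon> else if i < R then p i
      else if i = R then p R - (\<epsilon> - r) else 0)" for i
    unfolding steep_approx_def Let_def using True by (simp add: R_def r_def)
  show ?thesis
  proof (rule that[of R])
    show "\<forall>j\<in>{Suc R..d}. steep_approx d p \<epsilon> j = 0" using R by (simp add: steep_eq)
    have "(\<Sum>j=1..R. steep_approx d p \<epsilon> j)
        = (\<Sum>j=1..R. p j + (if j = 1 then \<epsilon> else 0) - (if j = R then \<epsilon> - r else 0))"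
      using R by (intro sum.cong) (auto simp: steep_eq)
    also have "\<dots> = (\<Sum>j=1..R. p j) + r"
      using R by (simp add: sum.distrib sum_subtractf)
    also have "\<dots> = 1"
      using sum_atLeastAtMost_split[of 1 R d p] R sum_p by (simp add: r_def)
    finally show "(\<Sum>j=1..R. steep_approx d p \<epsilon> j) = 1" .
  qed (use R in auto)
qed

lemma ratio_ge_if_tail_mass_ge:
  assumes \<epsilon>: "0 < \<epsilon>" "\<epsilon> < 1" and R: "1 \<le> R" "R \<le> d" and mass: "\<epsilon> \<le> (\<Sum>j=R..d. p j)"
  shows "2 powr (rel_ent d p s - f_sigma d p s \<epsilon>) \<le> p R / s R"
proof (rule ccontr)
  assume "\<not> ?thesis"
  then have "\<forall>i\<in>{R..d}. p i / s i < 2 powr (rel_ent d p s - f_sigma d p s \<epsilon>)"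
    using ratio_antimono R by (meson atLeastAtMost_iff le_less_trans not_le)
  then have "(\<Sum>j=R..d. p j) < \<epsilon>"
    using R by (intro mass_of_ratio_below_lt[OF \<epsilon>]) auto
  then show False using mass by simp
qed

lemma ell_le_lorenz_steep_approx:
  assumes \<epsilon>: "0 < \<epsilon>" "\<epsilon> < 1" and x: "0 \<le> x" "x \<le> 1"
  shows "ell (2 powr (rel_ent d p s - f_sigma d p s \<epsilon>)) x \<le> lorenz d s (steep_approx d p \<epsilon>) x"
proof -
  define c where "c = 2 powr (rel_ent d p s - f_sigma d p s \<epsilon>)"
  obtain R where R: "1 \<le> R" "R \<le> d" "\<epsilon> \<le> (\<Sum>j=R..d. p j)"
    and support: "\<forall>j\<in>{Suc R..d}. steep_approx d p \<epsilon> j = 0"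
    and sum_R: "(\<Sum>j=1..R. steep_approx d p \<epsilon> j) = 1"
    using steep_approx_support[OF \<epsilon>(1) less_imp_le[OF \<epsilon>(2)]] by blast
  have "c * s j \<le> p j" if "j \<in> {1..R}" for j
  proof -
    have "c \<le> p R / s R" unfolding c_def using ratio_ge_if_tail_mass_ge[OF \<epsilon> R] .
    also have "\<dots> \<le> p j / s j" using ratio_antimono that R by auto
    finally show ?thesis using that R s_pos by (simp add: le_divide_eq)
  qed
  then have "c * (\<Sum>j=1..R. s j) \<le> (\<Sum>j=1..R. p j)"
    unfolding sum_distrib_left by (intro sum_mono) auto
  also have "\<dots> \<le> (\<Sum>j=1..d. p j)" using R p_nonneg by (intro sum_mono2) auto
  finally have "c * (\<Sum>j=1..R. s j) \<le> 1" using sum_p by simp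
  then show ?thesis
    using min_linear_le_lorenz[OF s_pos sum_s R(1,2) support sum_R _ x] by (simp add: ell_def c_def)
qed

section \<open>The flat approximation\<close>

text \<open>\<open>head_gap m\<close> is the mass that can be removed from \<open>{1..m}\<close> while the flattened ratio
  there stays at least \<open>p (m+1) / s (m+1)\<close>; \<open>tail_gap n\<close> is the mass that can be added to
  \<open>{n..d}\<close> while the flattened ratio there stays at most \<open>p (n-1) / s (n-1)\<close>.\<close>

abbreviation head_gap :: "nat \<Rightarrow> real" where
  "head_gap m \<equiv> (\<Sum>i=1..m. p i) - p (m+1) / s (m+1) * (\<Sum>i=1..m. s i)"

abbreviation tail_gap :: "nat \<Rightarrow> real" where
  "tail_gap n \<equiv> p (n-1) / s (n-1) * (\<Sum>i=n..d. s i) - (\<Sum>i=n..d. p i)"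

context
  fixes \<epsilon> :: real
  assumes \<epsilon>_pos: "0 < \<epsilon>" and \<epsilon>_le_dist: "\<epsilon> \<le> trace_dist d p s"
begin

lemma two_le_d: "2 \<le> d"
  using two_le_d_if_trace_dist_pos \<epsilon>_pos \<epsilon>_le_dist by simp

lemma flat_M_spec: "1 \<le> flat_M d p s \<epsilon> \<and> flat_M d p s \<epsilon> \<le> d - 1 \<and> \<epsilon> \<le> head_gap (flat_M d p s \<epsilon>)"
  unfolding flat_M_def
proof (rule LeastI[of _ "d - 1"])
  have "trace_dist d p s \<le> head_gap (d - 1)"
    using two_le_d last_ratio_le_one ratio_antimono
    by (intro trace_dist_le_head_excess) auto
  then show "1 \<le> d - 1 \<and> d - 1 \<le> d - 1 \<and> \<epsilon> \<le> head_gap (d - 1)"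
    using two_le_d \<epsilon>_le_dist by simp
qed

lemma flat_M_least:
  assumes "1 \<le> m" "m < flat_M d p s \<epsilon>"
  shows "head_gap m < \<epsilon>"
proof -
  have "\<not> (1 \<le> m \<and> m \<le> d - 1 \<and> \<epsilon> \<le> head_gap m)"
    using not_less_Least[of m] assms(2) unfolding flat_M_def by blast
  moreover have "m \<le> d - 1" using assms(2) flat_M_spec by linarith
  ultimately show ?thesis using assms(1) by linarith
qed

lemma flat_N_spec:
  "flat_M d p s \<epsilon> < flat_N d p s \<epsilon> \<and> flat_N d p s \<epsilon> \<le> d \<and> \<epsilon> \<le> tail_gap (flat_N d p s \<epsilon>)"
proof -
  define M where "M = flat_M d p s \<epsilon>"
  define Q where "Q N \<longleftrightarrow> 2 \<le> N \<and> N \<le> d \<and> \<epsilon> \<le> tail_gap N" for N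
  have bounded: "\<And>N. Q N \<Longrightarrow> N \<le> d" by (simp add: Q_def)
  have M: "1 \<le> M" "M \<le> d - 1" "\<epsilon> \<le> head_gap M" using flat_M_spec by (simp_all add: M_def)
  have "\<epsilon> \<le> tail_gap (M + 1)"
  proof (cases "1 \<le> p M / s M")
    case True
    have "trace_dist d p s \<le> p M / s M * (\<Sum>i=Suc M..d. s i) - (\<Sum>i=Suc M..d. p i)"
      using M True ratio_ge_on_head[of M 1] ratio_le_on_tail[of M "p M / s M"]
      by (intro trace_dist_le_tail_deficit) auto
    then show ?thesis using \<epsilon>_le_dist by simp
  next
    case False
    then have "2 \<le> M" using first_ratio_ge_one M by (cases "M = 1") auto
    then have "head_gap (M - 1) < \<epsilon>" using flat_M_least[of "M - 1"] by (simp add: M_def)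
    moreover have "trace_dist d p s \<le> (\<Sum>i=1..M - 1. p i) - p M / s M * (\<Sum>i=1..M - 1. s i)"
      using M \<open>2 \<le> M\<close> False ratio_ge_on_head[of "M - 1" "p M / s M"] ratio_le_on_tail[of M 1]
        ratio_antimono[of "M - 1" M]
      by (intro trace_dist_le_head_excess) auto
    then have "trace_dist d p s \<le> head_gap (M - 1)" using \<open>2 \<le> M\<close> by simp
    ultimately show ?thesis using \<epsilon>_le_dist by simp
  qed
  then have "Q (M + 1)" using M by (simp add: Q_def)
  have "Q (flat_N d p s \<epsilon>)"
    unfolding flat_N_def Q_def[symmetric] using \<open>Q (M + 1)\<close> bounded by (rule GreatestI_nat)
  moreover have "M + 1 \<le> flat_N d p s \<epsilon>"
    unfolding flat_N_def Q_def[symmetric] using \<open>Q (M + 1)\<close> bounded by (rule Greatest_le_nat)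
  ultimately show ?thesis by (simp add: Q_def M_def)
qed

lemma flat_N_greatest:
  assumes "flat_N d p s \<epsilon> < n" "n \<le> d"
  shows "tail_gap n < \<epsilon>"
proof (rule ccontr)
  assume "\<not> tail_gap n < \<epsilon>"
  then have "n \<le> flat_N d p s \<epsilon>"
    unfolding flat_N_def using assms flat_N_spec
    by (intro Greatest_le_nat[where b = d]) auto
  then show False using assms by simp
qed

lemma next_ratio_le_flat_head_level:
  defines "M \<equiv> flat_M d p s \<epsilon>"
  shows "p (M+1) / s (M+1) \<le> ((\<Sum>i=1..M. p i) - \<epsilon>) / (\<Sum>i=1..M. s i)"
proof -
  have "0 < (\<Sum>i=1..M. s i)" using flat_M_spec s_pos by (intro sum_pos) (auto simp: M_def)
  then show ?thesis using flat_M_spec by (simp add: M_def le_divide_eq)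
qed

lemma flat_head_level_nonneg:
  defines "M \<equiv> flat_M d p s \<epsilon>"
  shows "0 \<le> ((\<Sum>i=1..M. p i) - \<epsilon>) / (\<Sum>i=1..M. s i)"
proof -
  have "M + 1 \<le> d" using flat_M_spec two_le_d unfolding M_def by linarith
  then have "0 \<le> p (M+1) / s (M+1)"
    using p_nonneg[rule_format, of "M+1"] s_pos[rule_format, of "M+1"] by simp
  then show ?thesis using next_ratio_le_flat_head_level by (simp add: M_def)
qed

lemma flat_head_level_le:
  assumes "\<epsilon> < 1"
  defines "M \<equiv> flat_M d p s \<epsilon>"
  shows "((\<Sum>i=1..M. p i) - \<epsilon>) / (\<Sum>i=1..M. s i) \<le> 2 powr (rel_ent d p s + f_sigma d p s \<epsilon>)"
    (is "_ \<le> ?c")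
proof (rule ccontr)
  assume "\<not> ?thesis"
  moreover have "0 < (\<Sum>i=1..M. s i)" using flat_M_spec s_pos by (intro sum_pos) (auto simp: M_def)
  ultimately have "?c * (\<Sum>i=1..M. s i) < (\<Sum>i=1..M. p i) - \<epsilon>" by (simp add: not_le less_divide_eq)
  moreover have "(\<Sum>i=1..M. p i) - ?c * (\<Sum>i=1..M. s i) \<le> (\<Sum>i\<in>{i\<in>{1..d}. ?c < p i / s i}. p i)"
    using flat_M_spec by (intro head_excess_le_mass_above) (auto simp: M_def)
  moreover have "(\<Sum>i\<in>{i\<in>{1..d}. ?c < p i / s i}. p i) < \<epsilon>"
    using \<epsilon>_pos \<open>\<epsilon> < 1\<close> by (intro mass_of_ratio_above_lt) auto
  ultimately show False by linarith
qed

lemma flat_tail_level_le_one: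
  defines "N \<equiv> flat_N d p s \<epsilon>"
  shows "((\<Sum>i=N..d. p i) + \<epsilon>) / (\<Sum>i=N..d. s i) \<le> 1"
proof (rule ccontr)
  have N: "2 \<le> N" "N \<le> d" "\<epsilon> \<le> tail_gap N"
    using flat_N_spec flat_M_spec by (auto simp: N_def)
  have "0 < (\<Sum>i=N..d. s i)" using N s_pos by (intro sum_pos) auto
  moreover assume "\<not> ?thesis"
  ultimately have deficit: "(\<Sum>i=N..d. s i) - (\<Sum>i=N..d. p i) < \<epsilon>" by (simp add: field_simps)
  then have "1 * (\<Sum>i=N..d. s i) < p (N-1) / s (N-1) * (\<Sum>i=N..d. s i)" using N by simp
  then have "1 < p (N-1) / s (N-1)" using \<open>0 < (\<Sum>i=N..d. s i)\<close> mult_less_cancel_right_pos by blast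
  then have head: "\<forall>i\<in>{1..N-1}. 1 \<le> p i / s i"
    using ratio_ge_on_head[of "N - 1" 1] N by simp
  show False
  proof (cases "p N / s N \<le> 1")
    case True
    have "trace_dist d p s \<le> 1 * (\<Sum>i=Suc (N-1)..d. s i) - (\<Sum>i=Suc (N-1)..d. p i)"
      using N head True ratio_le_on_tail[of N 1] by (intro trace_dist_le_tail_deficit) auto
    then show False using deficit \<epsilon>_le_dist N by simp
  next
    case False
    then have "N < d" using N last_ratio_le_one by (cases "N = d") auto
    then have "tail_gap (N + 1) < \<epsilon>" using flat_N_greatest[of "N + 1"] by (simp add: N_def)
    moreover have "trace_dist d p s \<le> p N / s N * (\<Sum>i=Suc N..d. s i) - (\<Sum>i=Suc N..d. p i)"
      using N False ratio_ge_on_head[of N 1] ratio_le_on_tail[of N "p N / s N"]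
      by (intro trace_dist_le_tail_deficit) auto
    ultimately show False using \<epsilon>_le_dist by simp
  qed
qed

lemma flat_approx_eq_levels:
  defines "M \<equiv> flat_M d p s \<epsilon>" and "N \<equiv> flat_N d p s \<epsilon>"
  shows "flat_approx d p s \<epsilon> i =
    (if i \<le> M then ((\<Sum>j=1..M. p j) - \<epsilon>) / (\<Sum>j=1..M. s j) * s i
     else if N \<le> i then ((\<Sum>j=N..d. p j) + \<epsilon>) / (\<Sum>j=N..d. s j) * s i
     else p i)"
  using \<epsilon>_le_dist by (simp add: flat_approx_def Let_def M_def N_def)

lemma flat_approx_bounds_if_eps_le_dist:
  assumes "\<epsilon> < 1" and j: "j \<in> {1..d}"
  shows "0 \<le> flat_approx d p s \<epsilon> j \<and>
    flat_approx d p s \<epsilon> j \<le> 2 powr (rel_ent d p s + f_sigma d p s \<epsilon>) * s j"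
proof -
  define c where "c = 2 powr (rel_ent d p s + f_sigma d p s \<epsilon>)"
  define M N where "M = flat_M d p s \<epsilon>" and "N = flat_N d p s \<epsilon>"
  define \<alpha> \<beta> where "\<alpha> = ((\<Sum>j=1..M. p j) - \<epsilon>) / (\<Sum>j=1..M. s j)"
    and "\<beta> = ((\<Sum>j=N..d. p j) + \<epsilon>) / (\<Sum>j=N..d. s j)"
  have M: "1 \<le> M" and N: "M < N" "N \<le> d" using flat_M_spec flat_N_spec by (auto simp: M_def N_def)
  have "0 < s j" "0 \<le> p j" using j s_pos p_nonneg by auto
  have next_le: "p (M+1) / s (M+1) \<le> \<alpha>"
    using next_ratio_le_flat_head_level by (simp add: \<alpha>_def M_def)
  have "0 \<le> \<alpha>" "\<alpha> \<le> c"
    using flat_head_level_nonneg flat_head_level_le[OF \<open>\<epsilon> < 1\<close>] by (simp_all add: \<alpha>_def c_def M_def)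
  have "0 \<le> (\<Sum>j=N..d. p j)" using M N p_nonneg by (intro sum_nonneg) auto
  moreover have "0 \<le> (\<Sum>j=N..d. s j)" using M N s_pos by (intro sum_nonneg) (auto simp: less_eq_real_def)
  ultimately have "0 \<le> \<beta>" using \<epsilon>_pos by (simp add: \<beta>_def)
  have "\<beta> \<le> 1" using flat_tail_level_le_one by (simp add: \<beta>_def N_def)
  also have "1 \<le> c"
    unfolding c_def using one_le_powr_rel_ent_plus_f_sigma \<epsilon>_pos \<open>\<epsilon> < 1\<close> by simp
  finally have "\<beta> \<le> c" .
  consider "j \<le> M" | "N \<le> j" "\<not> j \<le> M" | "M < j" "j < N" by linarith
  then show ?thesis
  proof cases
    case 1
    then have "flat_approx d p s \<epsilon> j = \<alpha> * s j" by (simp add: flat_approx_eq_levels \<alpha>_def M_def)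
    then show ?thesis using \<open>0 \<le> \<alpha>\<close> \<open>\<alpha> \<le> c\<close> \<open>0 < s j\<close> by (simp add: c_def mult_right_mono)
  next
    case 2
    then have "flat_approx d p s \<epsilon> j = \<beta> * s j"
      by (simp add: flat_approx_eq_levels \<beta>_def M_def N_def)
    then show ?thesis using \<open>0 \<le> \<beta>\<close> \<open>\<beta> \<le> c\<close> \<open>0 < s j\<close> by (simp add: c_def mult_right_mono)
  next
    case 3
    have "p j / s j \<le> c"
      using ratio_antimono[of "M+1" j] 3 j next_le \<open>\<alpha> \<le> c\<close> by simp
    moreover have "flat_approx d p s \<epsilon> j = p j" using 3 by (simp add: flat_approx_eq_levels M_def N_def)
    ultimately show ?thesis using \<open>0 \<le> p j\<close> \<open>0 < s j\<close> by (simp add: c_def divide_le_eq)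
  qed
qed

lemma sum_flat_approx_if_eps_le_dist: "(\<Sum>j=1..d. flat_approx d p s \<epsilon> j) = 1"
proof -
  define M N where "M = flat_M d p s \<epsilon>" and "N = flat_N d p s \<epsilon>"
  have MN: "1 \<le> M" "M < N" "N \<le> d" using flat_M_spec flat_N_spec by (auto simp: M_def N_def)
  have "0 < (\<Sum>j=1..M. s j)" "0 < (\<Sum>j=N..d. s j)" using MN s_pos by (auto intro!: sum_pos)
  have split3: "(\<Sum>j=1..d. f j) = (\<Sum>j=1..M. f j) + (\<Sum>j=Suc M..N-1. f j) + (\<Sum>j=N..d. f j)"
    for f :: "nat \<Rightarrow> real"
    using sum_atLeastAtMost_split[of 1 M d f] sum_atLeastAtMost_split[of "Suc M" "N - 1" d f] MN by simp
  have "(\<Sum>j=1..M. flat_approx d p s \<epsilon> j) = ((\<Sum>j=1..M. p j) - \<epsilon>) / (\<Sum>j=1..M. s j) * (\<Sum>j=1..M. s j)"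
    unfolding sum_distrib_left by (intro sum.cong) (auto simp: flat_approx_eq_levels M_def)
  also have "\<dots> = (\<Sum>j=1..M. p j) - \<epsilon>" using \<open>0 < (\<Sum>j=1..M. s j)\<close> by simp
  finally have head: "(\<Sum>j=1..M. flat_approx d p s \<epsilon> j) = (\<Sum>j=1..M. p j) - \<epsilon>" .
  have "(\<Sum>j=N..d. flat_approx d p s \<epsilon> j) = ((\<Sum>j=N..d. p j) + \<epsilon>) / (\<Sum>j=N..d. s j) * (\<Sum>j=N..d. s j)"
    unfolding sum_distrib_left using MN by (intro sum.cong) (auto simp: flat_approx_eq_levels M_def N_def)
  also have "\<dots> = (\<Sum>j=N..d. p j) + \<epsilon>" using \<open>0 < (\<Sum>j=N..d. s j)\<close> by simp
  finally have tail: "(\<Sum>j=N..d. flat_approx d p s \<epsilon> j) = (\<Sum>j=N..d. p j) + \<epsilon>" .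
  have middle: "(\<Sum>j=Suc M..N-1. flat_approx d p s \<epsilon> j) = (\<Sum>j=Suc M..N-1. p j)"
    by (intro sum.cong) (auto simp: flat_approx_eq_levels M_def N_def)
  have "(\<Sum>j=1..d. flat_approx d p s \<epsilon> j)
      = ((\<Sum>j=1..M. p j) - \<epsilon>) + (\<Sum>j=Suc M..N-1. p j) + ((\<Sum>j=N..d. p j) + \<epsilon>)"
    unfolding split3 head middle tail ..
  also have "\<dots> = 1" using split3[of p] sum_p by simp
  finally show ?thesis .
qed

end

lemma flat_approx_bounds:
  assumes \<epsilon>: "0 < \<epsilon>" "\<epsilon> < 1" and j: "j \<in> {1..d}"
  shows "0 \<le> flat_approx d p s \<epsilon> j \<and>
    flat_approx d p s \<epsilon> j \<le> 2 powr (rel_ent d p s + f_sigma d p s \<epsilon>) * s j"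
proof (cases "trace_dist d p s < \<epsilon>")
  case True
  then show ?thesis
    using one_le_powr_rel_ent_plus_f_sigma[of \<epsilon>] \<epsilon> j s_pos by (simp add: flat_approx_def less_imp_le)
qed (use flat_approx_bounds_if_eps_le_dist \<epsilon> j in auto)

lemma sum_flat_approx:
  assumes "0 < \<epsilon>"
  shows "(\<Sum>j=1..d. flat_approx d p s \<epsilon> j) = 1"
proof (cases "trace_dist d p s < \<epsilon>")
  case True
  then show ?thesis using sum_s by (simp add: flat_approx_def)
qed (use sum_flat_approx_if_eps_le_dist assms in auto)

lemma lorenz_flat_approx_le_ell:
  assumes \<epsilon>: "0 < \<epsilon>" "\<epsilon> < 1" and x: "0 \<le> x" "x \<le> 1"
  shows "lorenz d s (flat_approx d p s \<epsilon>) x \<le> ell (2 powr (rel_ent d p s + f_sigma d p s \<epsilon>)) x"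
proof -
  have "\<forall>j\<in>{1..d}. 0 \<le> flat_approx d p s \<epsilon> j"
    and "\<forall>j\<in>{1..d}. flat_approx d p s \<epsilon> j \<le> 2 powr (rel_ent d p s + f_sigma d p s \<epsilon>) * s j"
    using flat_approx_bounds[OF \<epsilon>] by auto
  then show ?thesis
    using lorenz_le_min_linear[OF s_pos sum_s _ sum_flat_approx[OF \<epsilon>(1)] _ x] by (simp add: ell_def)
qed

end

theorem lemma7:
  fixes d :: nat and p s :: "nat \<Rightarrow> real" and \<epsilon> :: real
  assumes "d \<ge> 1"
    and "\<forall>i\<in>{1..d}. 0 \<le> p i" and "(\<Sum>i=1..d. p i) = 1"
    and "\<forall>i\<in>{1..d}. 0 < s i" and "(\<Sum>i=1..d. s i) = 1"
    and "\<forall>i. 1 \<le> i \<and> i < d \<longrightarrow> p (i+1) / s (i+1) \<le> p i / s i"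
    and "0 < \<epsilon>" and "\<epsilon> < 1"
  shows "\<forall>x\<in>{0..1}.
      lorenz d s (steep_approx d p \<epsilon>) x
        \<ge> ell (2 powr (rel_ent d p s - f_sigma d p s \<epsilon>)) x
    \<and> lorenz d s (flat_approx d p s \<epsilon>) x
        \<le> ell (2 powr (rel_ent d p s + f_sigma d p s \<epsilon>)) x"
proof -
  interpret sorted_prob_pair d p s
    using assms by unfold_locales
  show ?thesis
    using ell_le_lorenz_steep_approx lorenz_flat_approx_le_ell \<open>0 < \<epsilon>\<close> \<open>\<epsilon> < 1\<close> by auto
qed

end
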